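(* Assume the setting below. Define $\beta_{TDMA}(x,L)=C\max\{\lfloor x/p\rfloor L,\ x-\lceil x/p\rceil(p-L)\}$ and $$\beta_{ST}(t)=\min_{0\le i\le N-1}\ \sum_{j=i}^{i+N-1}\beta_{TDMA}\big(t+p-L_j-g_i-o_{j,i},\ L_j\big),\qquad t\ge0,$$ where $g_i=o_i-(o_{i-1}+L_{i-1})$ is the idle time between the closing of the preceding ST window and the opening of window $i$. Then for all $s\in\mathbb R$ and $\Delta t\ge 0$, $C\cdot\Delta t_{ST}(s,s+\Delta t)\ge\beta_{ST}(\Delta t)$; i.e. $\beta_{ST}$ is a strict service curve for ST traffic at the port (non-preemption mode).
   Context: Fix an output port with physical link rate $C>0$. Its gate control list (GCL) is periodic with period $p>0$ and contains $N\ge 1$ scheduled-traffic (ST) windows per period. Window $k\in\{0,\dots,N-1\}$ is the interval $[o_k,o_k+L_k)$, where $0\le o_0<o_1<\dots<o_{N-1}<p$, $L_k\ge 0$, $o_k+L_k\le o_{k+1}$ for $k<N-1$ and $o_{N-1}+L_{N-1}\le o_0+p$. Indices are extended to all integers periodically: $o_{k+N}=o_k+p$, $L_{k+N}=L_k$. Relative offsets are $o_{j,i}=o_j-o_i$. Let $S=\bigcup_{k\in\mathbb Z}[o_k,o_k+L_k)$ and for $s\le t$ let $\Delta t_{ST}(s,t)$ be the Lebesgue measure of $S\cap[s,t]$. *)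

theory Defs
  imports "HOL-Analysis.Analysis"
begin

text \<open>A GCL with N windows per period p is given by offsets off k and lengths len k
  for k < N; these are extended periodically to all integer indices.\<close>

definition ext_off :: "real \<Rightarrow> nat \<Rightarrow> (nat \<Rightarrow> real) \<Rightarrow> int \<Rightarrow> real" where
  "ext_off p N off k = off (nat (k mod int N)) + p * of_int (k div int N)"

definition ext_len :: "nat \<Rightarrow> (nat \<Rightarrow> real) \<Rightarrow> int \<Rightarrow> real" where
  "ext_len N len k = len (nat (k mod int N))"

definition st_set :: "real \<Rightarrow> nat \<Rightarrow> (nat \<Rightarrow> real) \<Rightarrow> (nat \<Rightarrow> real) \<Rightarrow> real set" where
  "st_set p N off len =
     (\<Union>k::int. {ext_off p N off k ..< ext_off p N off k + ext_len N len k})"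

definition delta_st :: "real \<Rightarrow> nat \<Rightarrow> (nat \<Rightarrow> real) \<Rightarrow> (nat \<Rightarrow> real) \<Rightarrow> real \<Rightarrow> real \<Rightarrow> real" where
  "delta_st p N off len s t = measure lborel (st_set p N off len \<inter> {s..t})"

definition beta_tdma :: "real \<Rightarrow> real \<Rightarrow> real \<Rightarrow> real \<Rightarrow> real" where
  "beta_tdma C p x L =
     C * max (of_int \<lfloor>x / p\<rfloor> * L) (x - of_int \<lceil>x / p\<rceil> * (p - L))"

definition gap :: "real \<Rightarrow> nat \<Rightarrow> (nat \<Rightarrow> real) \<Rightarrow> (nat \<Rightarrow> real) \<Rightarrow> int \<Rightarrow> real" where
  "gap p N off len i =
     ext_off p N off i - (ext_off p N off (i - 1) + ext_len N len (i - 1))"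

definition beta_st :: "real \<Rightarrow> real \<Rightarrow> nat \<Rightarrow> (nat \<Rightarrow> real) \<Rightarrow> (nat \<Rightarrow> real) \<Rightarrow> real \<Rightarrow> real" where
  "beta_st C p N off len t =
     Min ((\<lambda>i::int. \<Sum>j\<in>{i..i + int N - 1}.
             beta_tdma C p
               (t + p - ext_len N len j - gap p N off len i
                  - (ext_off p N off j - ext_off p N off i))
               (ext_len N len j)) ` {0..<int N})"

end

theory Submission
  imports Defs
begin

text \<open>
  Let window \<open>i - 1\<close> open at or before \<open>s\<close> and window \<open>i\<close> after it, and let \<open>e\<close> be
  the closing time of window \<open>i - 1\<close>. Starting the observation interval at \<open>e\<close> instead of
  \<open>s\<close> can only decrease the ST time it contains: moving forward across the idle gap loses
  nothing, and moving back from inside window \<open>i - 1\<close> gains at the start at least what it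
  gives up at the end. Seen from \<open>e\<close>, each of the next \<open>N\<close> windows \<open>j = i, \<dots>, i + N - 1\<close>
  recurs with period \<open>p\<close> and first closes within one period, so, like a TDMA slot, its
  repetitions cover at least \<open>\<beta>_TDMA / C\<close> of any interval of length \<open>t\<close>. Distinct
  repetitions of distinct windows are disjoint, so these bounds add up; periodicity of the
  schedule reduces \<open>i\<close> modulo \<open>N\<close>, which is where the minimum in \<open>\<beta>_ST\<close> comes from.
\<close>

lemma fmeasurable_Icc: "{a..b::real} \<in> fmeasurable lborel"
  using fmeasurable_cbox[of a b] by simp

lemma fmeasurable_Int_Icc:
  fixes S :: "real set"
  shows "S \<in> sets lborel \<Longrightarrow> S \<inter> {a..b} \<in> fmeasurable lborel"
  using fmeasurable_Int_fmeasurable[OF fmeasurable_Icc[of a b], of S] by (simp add: Int_commute)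

lemma measure_Ico_Int_Icc_ge:
  fixes a l s t :: real
  assumes "s \<le> a" "0 \<le> l"
  shows "max 0 (min l (s + t - a)) \<le> measure lborel ({a..<a+l} \<inter> {s..s+t})"
proof (cases "s + t \<le> a")
  case False
  define m where "m = min l (s + t - a)"
  have "0 \<le> m" using False assms unfolding m_def by auto
  then have "max 0 (min l (s + t - a)) = measure lborel {a..<a+m}" unfolding m_def by simp
  also have "\<dots> \<le> measure lborel ({a..<a+l} \<inter> {s..s+t})"
  proof (rule measure_mono_fmeasurable)
    show "{a..<a+m} \<subseteq> {a..<a+l} \<inter> {s..s+t}" using assms unfolding m_def by auto
    show "{a..<a+l} \<inter> {s..s+t} \<in> fmeasurable lborel" by (rule fmeasurable_Int_Icc) simp
  qed simp
  finally show ?thesis .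
next
  case True
  then have "max 0 (min l (s + t - a)) = 0" by (simp add: max_def min_def)
  then show ?thesis by simp
qed

lemma measure_Int_Icc_shift_over_gap:
  fixes S :: "real set"
  assumes S: "S \<in> sets lborel" and gap: "S \<inter> {e..<b} = {}" and "e \<le> s" "s \<le> b"
  shows "measure lborel (S \<inter> {e..e+t}) \<le> measure lborel (S \<inter> {s..s+t})"
proof (rule measure_mono_fmeasurable)
  show "S \<inter> {e..e+t} \<subseteq> S \<inter> {s..s+t}"
    using gap \<open>e \<le> s\<close> \<open>s \<le> b\<close> by (auto simp: disjoint_iff not_le)
  show "S \<inter> {s..s+t} \<in> fmeasurable lborel" using S by (rule fmeasurable_Int_Icc)
qed (use S in simp)

lemma measure_Int_Icc_shift_into_cover:
  fixes S :: "real set"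
  assumes S: "S \<in> sets lborel" and cover: "{s..<e} \<subseteq> S" and "s \<le> e" "0 \<le> t"
  shows "measure lborel (S \<inter> {e..e+t}) \<le> measure lborel (S \<inter> {s..s+t})"
proof (cases "t \<le> e - s")
  case True
  have "measure lborel (S \<inter> {e..e+t}) \<le> measure lborel {e..e+t}"
    by (rule measure_mono_fmeasurable) (use S fmeasurable_Icc in auto)
  also have "\<dots> = measure lborel {s..<s+t}" using \<open>0 \<le> t\<close> by simp
  also have "\<dots> \<le> measure lborel (S \<inter> {s..s+t})"
    by (rule measure_mono_fmeasurable)
      (use cover True S fmeasurable_Int_Icc[OF S] in auto)
  finally show ?thesis .
next
  case False
  have fin: "S \<inter> {e..s+t} \<in> fmeasurable lborel" using S by (rule fmeasurable_Int_Icc)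
  have "measure lborel (S \<inter> {e..e+t}) \<le> measure lborel ((S \<inter> {e..s+t}) \<union> {s+t..e+t})"
    by (rule measure_mono_fmeasurable) (use S fin fmeasurable_Icc in auto)
  also have "\<dots> \<le> measure lborel (S \<inter> {e..s+t}) + measure lborel {s+t..e+t}"
    by (rule measure_Un_le) (use S in auto)
  also have "\<dots> = measure lborel {s..<e} + measure lborel (S \<inter> {e..s+t})"
    using \<open>s \<le> e\<close> by simp
  also have "\<dots> = measure lborel ({s..<e} \<union> (S \<inter> {e..s+t}))"
    by (rule measure_Union[symmetric]) (use fin \<open>s \<le> e\<close> in \<open>auto simp: fmeasurable_def\<close>)
  also have "{s..<e} \<union> (S \<inter> {e..s+t}) = S \<inter> {s..s+t}"
    using cover False \<open>s \<le> e\<close> by auto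
  finally show ?thesis .
qed

lemma beta_tdma_le:
  fixes C p x l :: real
  assumes "0 \<le> C" "0 < p" "0 \<le> x"
  shows "beta_tdma C p x l
           \<le> C * (real (nat \<lfloor>x/p\<rfloor>) * l + max 0 (x - (real (nat \<lfloor>x/p\<rfloor>) + 1) * p + l))"
proof -
  have "max (of_int \<lfloor>x/p\<rfloor> * l) (x - of_int \<lceil>x/p\<rceil> * (p - l))
        \<le> of_int \<lfloor>x/p\<rfloor> * l + max 0 (x - (of_int \<lfloor>x/p\<rfloor> + 1) * p + l)"
  proof (cases "x / p = of_int \<lfloor>x/p\<rfloor>")
    case True
    then have "\<lceil>x/p\<rceil> = \<lfloor>x/p\<rfloor>" "x = of_int \<lfloor>x/p\<rfloor> * p"
      using \<open>0 < p\<close> by (metis ceiling_of_int, simp add: field_simps)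
    then show ?thesis by (simp add: algebra_simps)
  next
    case False
    then have "\<lceil>x/p\<rceil> = \<lfloor>x/p\<rfloor> + 1" by (metis ceiling_altdef)
    then show ?thesis by (simp add: algebra_simps)
  qed
  moreover have "real (nat \<lfloor>x/p\<rfloor>) = of_int \<lfloor>x/p\<rfloor>" using assms by simp
  ultimately show ?thesis
    unfolding beta_tdma_def using mult_left_mono[OF _ \<open>0 \<le> C\<close>] by presburger
qed

lemma beta_tdma_le_periodic_window_service:
  fixes C p a l s t :: real
  assumes "0 \<le> C" "0 < p" "0 \<le> l" "s \<le> a" "a + l \<le> s + p" "0 \<le> t"
  defines "x \<equiv> t + p - l - (a - s)"
  shows "beta_tdma C p x l
           \<le> C * (\<Sum>k\<le>nat \<lfloor>x/p\<rfloor>. measure lborel ({a + k * p ..< a + k * p + l} \<inter> {s..s+t}))"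
proof -
  define n where "n = nat \<lfloor>x/p\<rfloor>"
  define g where "g k = max 0 (min l (s + t - (a + real k * p)))" for k :: nat
  have "0 \<le> x" using assms unfolding x_def by simp
  then have n: "real n * p \<le> x" "x < (real n + 1) * p"
    using floor_divide_lower[of p x] floor_divide_upper[of p x] \<open>0 < p\<close> unfolding n_def by auto
  \<comment> \<open>The first \<open>n\<close> repetitions lie inside \<open>[s, s + t]\<close>, the next one only partly.\<close>
  have full: "g k = l" if "k < n" for k
  proof -
    have "(real k + 1) * p \<le> real n * p" using that \<open>0 < p\<close> by (simp add: mult_right_mono)
    then show ?thesis using n \<open>0 \<le> l\<close> unfolding g_def x_def by (simp add: algebra_simps)
  qed
  have last: "g n = max 0 (x - (real n + 1) * p + l)"
    using n unfolding g_def x_def by (simp add: algebra_simps)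
  have "beta_tdma C p x l \<le> C * (real n * l + max 0 (x - (real n + 1) * p + l))"
    using beta_tdma_le[OF \<open>0 \<le> C\<close> \<open>0 < p\<close> \<open>0 \<le> x\<close>] unfolding n_def .
  also have "real n * l + max 0 (x - (real n + 1) * p + l) = (\<Sum>k\<le>n. g k)"
    using full last by (simp add: lessThan_Suc_atMost[symmetric])
  also have "C * \<dots> \<le> C * (\<Sum>k\<le>n. measure lborel ({a + k * p ..< a + k * p + l} \<inter> {s..s+t}))"
    unfolding g_def using assms
    by (intro mult_left_mono sum_mono measure_Ico_Int_Icc_ge add_increasing2) auto
  finally show ?thesis unfolding n_def .
qed

lemma inj_on_block_index:
  "inj_on (\<lambda>(j, k). j + int k * int N) ({i..i + int N - 1} \<times> UNIV)"
proof (rule inj_onI)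
  fix x y :: "int \<times> nat"
  assume "x \<in> {i..i + int N - 1} \<times> UNIV" "y \<in> {i..i + int N - 1} \<times> UNIV"
    and "(\<lambda>(j, k). j + int k * int N) x = (\<lambda>(j, k). j + int k * int N) y"
  moreover obtain j k j' k' where xy: "x = (j, k)" "y = (j', k')" by fastforce
  ultimately have j: "0 \<le> j - i" "j - i < int N" "0 \<le> j' - i" "j' - i < int N"
    and eq: "j - i + int k * int N = j' - i + int k' * int N" by auto
  then have "(j - i) mod int N = (j' - i) mod int N" by (metis mod_mult_self1)
  then have "j = j'" using j by simp
  then show "x = y" using eq j xy by simp
qed

locale gcl =
  fixes p :: real and N :: nat and off len :: "nat \<Rightarrow> real"
  assumes p_pos: "0 < p" and N_pos: "1 \<le> N"
    and len_nonneg: "\<And>k. k < N \<Longrightarrow> 0 \<le> len k"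
    and window_le_next: "\<And>k. Suc k < N \<Longrightarrow> off k + len k \<le> off (Suc k)"
    and last_window_le: "off (N - 1) + len (N - 1) \<le> off 0 + p"
begin

abbreviation "wstart \<equiv> ext_off p N off"
abbreviation "wlen \<equiv> ext_len N len"
abbreviation "wend m \<equiv> wstart m + wlen m"
abbreviation "win m \<equiv> {wstart m ..< wend m}"
abbreviation "S \<equiv> st_set p N off len"

lemma wstart_shift: "wstart (m + q * int N) = wstart m + of_int q * p"
  using N_pos by (simp add: ext_off_def algebra_simps)

lemma wlen_shift: "wlen (m + q * int N) = wlen m"
  using N_pos by (simp add: ext_len_def)

lemma wlen_nonneg: "0 \<le> wlen m"
  using N_pos by (simp add: ext_len_def len_nonneg nat_less_iff)

lemma wend_le_wstart_Suc: "wend m \<le> wstart (m + 1)"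
proof -
  define r where "r = m mod int N"
  define q where "q = m div int N"
  have m: "m = r + q * int N" and r: "0 \<le> r" "r < int N"
    using N_pos unfolding r_def q_def by auto
  have wend_m: "wend m = off (nat r) + len (nat r) + of_int q * p"
    using r unfolding m wstart_shift wlen_shift by (simp add: ext_off_def ext_len_def)
  show ?thesis
  proof (cases "r + 1 < int N")
    case True
    then have "wstart (m + 1) = off (Suc (nat r)) + of_int q * p"
      using wstart_shift[of "r + 1" q] r unfolding m
      by (simp add: ext_off_def algebra_simps Suc_nat_eq_nat_zadd1)
    then show ?thesis using wend_m window_le_next[of "nat r"] True r by simp
  next
    case False
    then have "r = int N - 1" using r by simp
    then have "nat r = N - 1" "m + 1 = 0 + (q + 1) * int N" unfolding m by (auto simp: algebra_simps)
    then show ?thesis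
      using wend_m wstart_shift[of 0 "q + 1"] last_window_le
      by (simp add: ext_off_def algebra_simps)
  qed
qed

lemma wstart_mono: "m \<le> m' \<Longrightarrow> wstart m \<le> wstart m'"
proof (induction m' rule: int_ge_induct)
  case (step i)
  then show ?case using wend_le_wstart_Suc[of i] wlen_nonneg[of i] by linarith
qed simp

lemma wend_le_wstart: "m < m' \<Longrightarrow> wend m \<le> wstart m'"
  using wend_le_wstart_Suc[of m] wstart_mono[of "m + 1" m'] by simp

lemma wend_mono: "m \<le> m' \<Longrightarrow> wend m \<le> wend m'"
  using wend_le_wstart[of m m'] wlen_nonneg[of m'] by (cases "m = m'") auto

lemma win_disjoint: "m \<noteq> m' \<Longrightarrow> win m \<inter> win m' = {}"
  using wend_le_wstart[of m m'] wend_le_wstart[of m' m] by (cases "m < m'") auto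

lemma st_set_eq: "S = (\<Union>m. win m)"
  by (simp add: st_set_def)

lemma sets_st_set [measurable]: "S \<in> sets lborel"
  unfolding st_set_eq by auto

lemma st_set_Int_gap: "S \<inter> {wend (i - 1) ..< wstart i} = {}"
proof -
  have "win m \<inter> {wend (i - 1) ..< wstart i} = {}" for m
    using wend_mono[of m "i - 1"] wstart_mono[of i m] by (cases "m \<le> i - 1") auto
  then show ?thesis unfolding st_set_eq by blast
qed

lemma sum_measure_win_le:
  assumes "finite M"
  shows "(\<Sum>m\<in>M. measure lborel (win m \<inter> {a..b})) \<le> measure lborel (S \<inter> {a..b})"
proof -
  have "(\<Sum>m\<in>M. measure lborel (win m \<inter> {a..b})) = measure lborel (\<Union>m\<in>M. win m \<inter> {a..b})"
  proof (rule measure_finite_Union[symmetric])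
    show "disjoint_family_on (\<lambda>m. win m \<inter> {a..b}) M"
      using win_disjoint by (fastforce simp: disjoint_family_on_def)
    show "emeasure lborel (win m \<inter> {a..b}) \<noteq> \<infinity>" for m
      using fmeasurable_Int_Icc[of "win m" a b] by (simp add: fmeasurable_def)
  qed (use assms in auto)
  also have "\<dots> \<le> measure lborel (S \<inter> {a..b})"
    by (rule measure_mono_fmeasurable) (auto simp: st_set_eq intro: fmeasurable_Int_Icc)
  finally show ?thesis .
qed

lemma exists_window_index: "\<exists>i. wstart (i - 1) \<le> s \<and> s < wstart i"
proof -
  define q where "q = \<lfloor>(s - off 0) / p\<rfloor>"
  have "of_int q * p \<le> s - off 0" "s - off 0 < (of_int q + 1) * p"
    using floor_divide_lower[OF p_pos] floor_divide_upper[OF p_pos] unfolding q_def by auto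
  moreover have "wstart (0 + q * int N) = off 0 + of_int q * p"
    "wstart (0 + (q + 1) * int N) = off 0 + (of_int q + 1) * p"
    unfolding wstart_shift by (simp_all add: ext_off_def)
  ultimately have lo: "wstart (q * int N) \<le> s" and hi: "s < wstart (q * int N + int N)"
    by (simp_all add: algebra_simps)
  define P where "P k \<longleftrightarrow> s < wstart (q * int N + int k)" for k :: nat
  define k where "k = (LEAST k. P k)"
  have "P N" using hi unfolding P_def by simp
  then have "P k" unfolding k_def by (rule LeastI)
  moreover have "k \<noteq> 0" using \<open>P k\<close> lo unfolding P_def by (cases k) auto
  moreover have "\<not> P (k - 1)"
    using \<open>k \<noteq> 0\<close> not_less_Least[of "k - 1" P] unfolding k_def by simp
  ultimately show ?thesis
    unfolding P_def by (intro exI[of _ "q * int N + int k"]) (simp add: of_nat_diff add_diff_eq)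
qed

lemma service_from_wend_le:
  assumes "wstart (i - 1) \<le> s" "s < wstart i" "0 \<le> t"
  shows "measure lborel (S \<inter> {wend (i - 1) .. wend (i - 1) + t}) \<le> measure lborel (S \<inter> {s..s+t})"
proof (cases "s \<le> wend (i - 1)")
  case True
  have "{s..<wend (i - 1)} \<subseteq> win (i - 1)" using assms(1) by auto
  then have "{s..<wend (i - 1)} \<subseteq> S" unfolding st_set_eq by blast
  then show ?thesis
    using measure_Int_Icc_shift_into_cover[OF sets_st_set _ True \<open>0 \<le> t\<close>] by simp
next
  case False
  then show ?thesis
    using measure_Int_Icc_shift_over_gap[OF sets_st_set st_set_Int_gap] assms by simp
qed

definition beta_st_term :: "real \<Rightarrow> real \<Rightarrow> int \<Rightarrow> real" where
  "beta_st_term C t i = (\<Sum>j\<in>{i..i + int N - 1}.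
     beta_tdma C p (t + p - wlen j - gap p N off len i - (wstart j - wstart i)) (wlen j))"

lemma beta_st_term_shift: "beta_st_term C t (i + q * int N) = beta_st_term C t i"
proof -
  have gap: "gap p N off len (i + q * int N) = gap p N off len i"
    unfolding gap_def using wstart_shift[of i q] wstart_shift[of "i - 1" q] wlen_shift[of "i - 1" q]
    by (simp add: algebra_simps)
  have "beta_st_term C t (i + q * int N) = (\<Sum>j\<in>(\<lambda>j. j + q * int N) ` {i..i + int N - 1}.
     beta_tdma C p (t + p - wlen j - gap p N off len i - (wstart j - wstart (i + q * int N))) (wlen j))"
    unfolding beta_st_term_def gap by (simp add: algebra_simps)
  also have "\<dots> = beta_st_term C t i"
    unfolding beta_st_term_def
    by (subst sum.reindex) (auto simp: inj_on_def wstart_shift wlen_shift)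
  finally show ?thesis .
qed

lemma beta_st_le_term: "beta_st C p N off len t \<le> beta_st_term C t i"
proof -
  have "i mod int N \<in> {0..<int N}" using N_pos by simp
  then have "beta_st C p N off len t \<le> beta_st_term C t (i mod int N)"
    unfolding beta_st_def beta_st_term_def by (intro Min_le) auto
  also have "\<dots> = beta_st_term C t i"
    using beta_st_term_shift[of C t "i mod int N" "i div int N"] by simp
  finally show ?thesis .
qed

lemma beta_st_term_le_service_from_wend:
  assumes "0 \<le> C" "0 \<le> t"
  shows "beta_st_term C t i \<le> C * measure lborel (S \<inter> {wend (i - 1) .. wend (i - 1) + t})"
proof -
  define s0 where "s0 = wend (i - 1)"
  define J where "J = {i..i + int N - 1}"
  define n where "n j = nat \<lfloor>(t + p - wlen j - (wstart j - s0)) / p\<rfloor>" for j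
  define \<mu> where "\<mu> m = measure lborel (win m \<inter> {s0..s0+t})" for m
  have term_le: "beta_tdma C p (t + p - wlen j - gap p N off len i - (wstart j - wstart i)) (wlen j)
      \<le> C * (\<Sum>k\<le>n j. \<mu> (j + int k * int N))" if "j \<in> J" for j
  proof -
    have start: "s0 \<le> wstart j"
      using wend_le_wstart_Suc[of "i - 1"] wstart_mono[of i j] that unfolding s0_def J_def by simp
    have stop: "wend j \<le> s0 + p"
      using wend_mono[of j "i - 1 + 1 * int N"] that unfolding s0_def J_def wstart_shift wlen_shift
      by simp
    have win: "win (j + int k * int N) = {wstart j + k * p ..< wstart j + k * p + wlen j}" for k
      by (simp add: wstart_shift wlen_shift)
    have arg: "t + p - wlen j - gap p N off len i - (wstart j - wstart i)
        = t + p - wlen j - (wstart j - s0)"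
      unfolding gap_def s0_def by simp
    show ?thesis
      unfolding arg n_def \<mu>_def win
      by (rule beta_tdma_le_periodic_window_service[OF \<open>0 \<le> C\<close> p_pos wlen_nonneg start stop \<open>0 \<le> t\<close>])
  qed
  define M where "M = Sigma J (\<lambda>j. {..n j})"
  have inj: "inj_on (\<lambda>(j, k). j + int k * int N) M"
    using inj_on_block_index[of N i] unfolding M_def J_def by (rule inj_on_subset) auto
  have "beta_st_term C t i \<le> (\<Sum>j\<in>J. C * (\<Sum>k\<le>n j. \<mu> (j + int k * int N)))"
    unfolding beta_st_term_def J_def[symmetric] by (rule sum_mono) (rule term_le)
  also have "\<dots> = C * (\<Sum>(j, k)\<in>M. \<mu> (j + int k * int N))"
    unfolding sum_distrib_left[symmetric] M_def by (subst sum.Sigma) (auto simp: J_def)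
  also have "\<dots> = C * (\<Sum>m\<in>(\<lambda>(j, k). j + int k * int N) ` M. \<mu> m)"
    using sum.reindex[OF inj, of \<mu>] by (simp add: comp_def case_prod_unfold)
  also have "\<dots> \<le> C * measure lborel (S \<inter> {s0..s0+t})"
    unfolding \<mu>_def using \<open>0 \<le> C\<close>
    by (intro mult_left_mono sum_measure_win_le finite_imageI) (auto simp: M_def J_def)
  finally show ?thesis unfolding s0_def .
qed

end

theorem lemma4:
  fixes C p :: real and N :: nat and off len :: "nat \<Rightarrow> real"
  assumes "C > 0" and "p > 0" and "N \<ge> 1"
    and "0 \<le> off 0"
    and "\<And>k. Suc k < N \<Longrightarrow> off k < off (Suc k)"
    and "off (N - 1) < p"
    and "\<And>k. k < N \<Longrightarrow> len k \<ge> 0"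
    and "\<And>k. Suc k < N \<Longrightarrow> off k + len k \<le> off (Suc k)"
    and "off (N - 1) + len (N - 1) \<le> off 0 + p"
  shows "\<forall>s \<Delta>t. \<Delta>t \<ge> 0 \<longrightarrow>
           C * delta_st p N off len s (s + \<Delta>t) \<ge> beta_st C p N off len \<Delta>t"
proof (intro allI impI)
  interpret gcl p N off len
    using assms by unfold_locales auto
  fix s \<Delta>t :: real
  assume "0 \<le> \<Delta>t"
  obtain i where i: "wstart (i - 1) \<le> s" "s < wstart i"
    using exists_window_index by blast
  have "beta_st C p N off len \<Delta>t \<le> beta_st_term C \<Delta>t i"
    by (rule beta_st_le_term)
  also have "\<dots> \<le> C * measure lborel (S \<inter> {wend (i - 1) .. wend (i - 1) + \<Delta>t})"
    using assms(1) \<open>0 \<le> \<Delta>t\<close> by (intro beta_st_term_le_service_from_wend) auto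
  also have "\<dots> \<le> C * measure lborel (S \<inter> {s..s+\<Delta>t})"
    using service_from_wend_le[OF i \<open>0 \<le> \<Delta>t\<close>] assms(1) by simp
  finally show "C * delta_st p N off len s (s + \<Delta>t) \<ge> beta_st C p N off len \<Delta>t"
    unfolding delta_st_def .
qed

end
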